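(* Let $S:\mathbb{R}^m\times\mathbb{R}^n\to\mathbb{R}^q$ be a bilinear map with lifted linear operator $\mathscr{S}$, let $\mathcal{K}\subseteq\mathbb{R}^m\times\mathbb{R}^n$, let $\mathcal{K}'\subseteq\mathbb{R}^{m\times n}$ satisfy $\mathcal{K}'\cap\{W:\operatorname{rank}(W)\le1\}=\{xy^T:(x,y)\in\mathcal{K}\}$, and let $\mathcal{M}=\mathcal{K}'-\mathcal{K}'$. Assume $\mathcal{N}(\mathscr{S},1)\cap\mathcal{M}=\{0\}$. Let $\mathbf{M}=\sigma uv^T\in\mathcal{K}'$ be a rank one matrix ($\sigma>0$, $\|u\|_2=\|v\|_2=1$). Suppose that for every $X\in\mathcal{N}(\mathscr{S},2)\cap\mathcal{M}\setminus\{0\}$ either $u\notin\mathcal{C}(X)$ or $v\notin\mathcal{R}(X)$. Then, given $z=\mathscr{S}(\mathbf{M})$, $\mathbf{M}$ is successfully recovered by solving "minimize $\operatorname{rank}(W)$ subject to $\mathscr{S}(W)=z$, $W\in\mathcal{K}'$", i.e. $\mathbf{M}$ is its unique optimal solution.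
   Context: A map is bilinear if linear in each argument separately. For $j=1,\dots,q$ let $S_j$ be the unique matrix with $(S(x,y))_j=x^TS_jy$; the lifted operator is $(\mathscr{S}(W))_j=\operatorname{tr}(S_j^TW)$. $\mathcal{N}(\mathscr{S},k)=\{X:\operatorname{rank}(X)\le k,\ \mathscr{S}(X)=0\}$. $\mathcal{K}'-\mathcal{K}'=\{X_1-X_2:X_1,X_2\in\mathcal{K}'\}$. $\mathcal{C}(X)$ and $\mathcal{R}(X)$ denote the column space and row space of $X$. *)

theory Defs
  imports "HOL-Analysis.Analysis"
begin

definition coef_mat :: "(real^'m \<Rightarrow> real^'n \<Rightarrow> real^'q) \<Rightarrow> 'q \<Rightarrow> real^'n^'m" where
  "coef_mat S j = (THE A. \<forall>x y. S x y $ j = x \<bullet> (A *v y))"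

definition lift_op :: "(real^'m \<Rightarrow> real^'n \<Rightarrow> real^'q) \<Rightarrow> real^'n^'m \<Rightarrow> real^'q" where
  "lift_op S W = (\<chi> j. trace (transpose (coef_mat S j) ** W))"

definition null_rank :: "(real^'m \<Rightarrow> real^'n \<Rightarrow> real^'q) \<Rightarrow> nat \<Rightarrow> (real^'n^'m) set" where
  "null_rank S k = {X. rank X \<le> k \<and> lift_op S X = 0}"

definition outer :: "real^'m \<Rightarrow> real^'n \<Rightarrow> real^'n^'m" where
  "outer x y = (\<chi> i j. x $ i * y $ j)"

definition set_diff_minus :: "(real^'n^'m) set \<Rightarrow> (real^'n^'m) set" where
  "set_diff_minus K = {X1 - X2 | X1 X2. X1 \<in> K \<and> X2 \<in> K}"

definition col_space :: "real^'n^'m \<Rightarrow> (real^'m) set" where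
  "col_space X = span (columns X)"

definition row_space :: "real^'n^'m \<Rightarrow> (real^'n) set" where
  "row_space X = span (rows X)"

end

theory Submission
  imports Defs
begin

text \<open>Suppose a feasible W \<noteq> M had rank at most one, say W = x y^T. Then D = W - M lies in
  the null space of the lifted operator and in K' - K'. If x is parallel to u or y to v, then
  D is again an outer product, which the hypothesis on N(S,1) forbids. Otherwise D has rank at
  most two, and projecting v away from y (resp. u away from x) produces a vector that D (resp.
  D^T) maps onto a nonzero multiple of u (resp. v); so u lies in the column space and v in the
  row space of D, which the hypothesis on N(S,2) forbids.\<close>

lemma linear_lift_op: "linear (lift_op S)"
  by (rule linearI)
    (simp_all add: lift_op_def vec_eq_iff trace_def matrix_matrix_mult_def
      sum.distrib sum_distrib_left distrib_left mult.left_commute)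

lemma outer_mult_vec: "outer x y *v w = (y \<bullet> w) *\<^sub>R x"
  by (simp add: vec_eq_iff outer_def matrix_vector_mult_def inner_vec_def sum_distrib_left mult_ac)

lemma scaleR_outer_left: "c *\<^sub>R outer x y = outer (c *\<^sub>R x) y"
  by (simp add: vec_eq_iff outer_def)

lemma column_outer: "column j (outer x y) = (y $ j) *\<^sub>R x"
  by (simp add: vec_eq_iff outer_def column_def)

lemma rank_le_card_of_columns_subset_span:
  fixes A :: "real^'n^'m"
  assumes "columns A \<subseteq> span B" and "finite B"
  shows "rank A \<le> card B"
  using dim_le_card[OF assms] by (simp add: column_rank_def)

lemma rank_outer_le_1: "rank (outer (x :: real^'m) (y :: real^'n)) \<le> 1"
proof -
  have "columns (outer x y) \<subseteq> span {x}"
    by (auto simp: columns_def column_outer intro: span_mul span_base)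
  then show ?thesis
    using rank_le_card_of_columns_subset_span by fastforce
qed

lemma rank_outer_diff_le_2:
  "rank (outer (x :: real^'m) (y :: real^'n) - outer a b) \<le> 2"
proof -
  have "column j (outer x y - outer a b) = (y $ j) *\<^sub>R x - (b $ j) *\<^sub>R a" for j
    by (simp add: vec_eq_iff column_def outer_def)
  then have "columns (outer x y - outer a b) \<subseteq> span {x, a}"
    unfolding columns_def by (auto intro: span_diff span_mul span_base)
  then have "rank (outer x y - outer a b) \<le> card {x, a}"
    by (rule rank_le_card_of_columns_subset_span) simp
  also have "\<dots> \<le> 2"
    by (simp add: card_insert_if)
  finally show ?thesis .
qed

lemma rank_le_1_imp_outer:
  fixes W :: "real^'n^'m"
  assumes "rank W \<le> 1"
  obtains x y where "W = outer x y"
proof -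
  obtain B where B: "B \<subseteq> columns W" "independent B" "columns W \<subseteq> span B"
      "card B = dim (columns W)"
    using basis_exists by blast
  have "card B \<le> 1"
    using B(4) assms by (simp add: column_rank_def)
  then have "\<forall>a\<in>B. \<forall>b\<in>B. a = b"
    using independent_imp_finite[OF B(2)] by (simp add: card_le_Suc0_iff_eq)
  then obtain x where "B \<subseteq> {x}"
    by (metis empty_subsetI insertI1 subsetI singleton_iff)
  then have "columns W \<subseteq> span {x}"
    using B(3) span_mono by blast
  then have "\<forall>j. \<exists>c. column j W = c *\<^sub>R x"
    by (auto simp: columns_def span_singleton)
  then obtain c where c: "\<And>j. column j W = c j *\<^sub>R x"
    by metis
  have "W $ i $ j = x $ i * c j" for i j
    using arg_cong[OF c, of "\<lambda>v. v $ i"] by (simp add: column_def)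
  then have "W = outer x (\<chi> j. c j)"
    by (simp add: vec_eq_iff outer_def)
  then show ?thesis by (rule that)
qed

text \<open>The witness w is the component of b orthogonal to y; the matrix maps it to
  -s (b \<bullet> w) a, and b \<bullet> w = w \<bullet> w \<noteq> 0.\<close>

lemma mem_col_space_outer_diff:
  fixes x a :: "real^'m" and y b :: "real^'n"
  assumes b: "b \<notin> span {y}" and s: "s \<noteq> 0"
  shows "a \<in> col_space (outer x y - s *\<^sub>R outer a b)"
proof -
  define w where "w = b - ((b \<bullet> y) / (y \<bullet> y)) *\<^sub>R y"
  have yw: "y \<bullet> w = 0"
    by (cases "y = 0") (simp_all add: w_def inner_diff_right inner_commute)
  have bw: "b \<bullet> w = w \<bullet> w"
    by (simp add: w_def inner_diff_left yw[unfolded w_def])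
  have "w \<noteq> 0"
  proof
    assume "w = 0"
    then have "b = ((b \<bullet> y) / (y \<bullet> y)) *\<^sub>R y"
      by (simp add: w_def)
    then have "b \<in> span {y}"
      by (metis span_mul span_base singletonI)
    with b show False ..
  qed
  then have bw0: "s * (b \<bullet> w) \<noteq> 0"
    using s bw by simp
  have "(outer x y - s *\<^sub>R outer a b) *v w = - (s * (b \<bullet> w)) *\<^sub>R a"
    by (simp add: matrix_vector_mult_diff_rdistrib scaleR_outer_left outer_mult_vec yw)
  then have "(outer x y - s *\<^sub>R outer a b) *v ((- 1 / (s * (b \<bullet> w))) *\<^sub>R w) = a"
    using bw0 by (simp only: matrix_vector_mult_scaleR) simp
  then show ?thesis
    unfolding col_space_def using matrix_vector_mult_in_columnspace by metis
qed

lemma mem_row_space_outer_diff: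
  fixes x a :: "real^'m" and y b :: "real^'n"
  assumes "a \<notin> span {x}" and "s \<noteq> 0"
  shows "b \<in> row_space (outer x y - s *\<^sub>R outer a b)"
proof -
  have "transpose (outer x y - s *\<^sub>R outer a b) = outer y x - s *\<^sub>R outer b a"
    by (simp add: vec_eq_iff transpose_def outer_def)
  then show ?thesis
    using mem_col_space_outer_diff[OF assms]
    by (metis row_space_def col_space_def columns_transpose)
qed

lemma rank_le_1_or_spans_outer_diff:
  fixes x a :: "real^'m" and y b :: "real^'n"
  assumes s: "s \<noteq> 0"
  defines "D \<equiv> outer x y - s *\<^sub>R outer a b"
  shows "rank D \<le> 1 \<or> (rank D \<le> 2 \<and> a \<in> col_space D \<and> b \<in> row_space D)"
proof -
  consider (b_parallel) "b \<in> span {y}" | (a_parallel) "a \<in> span {x}"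
    | (general) "b \<notin> span {y}" "a \<notin> span {x}"
    by blast
  then show ?thesis
  proof cases
    case b_parallel
    then obtain c where "b = c *\<^sub>R y"
      by (auto simp: span_singleton)
    then have "D = outer (x - (s * c) *\<^sub>R a) y"
      by (simp add: D_def vec_eq_iff outer_def algebra_simps)
    then show ?thesis
      using rank_outer_le_1 by metis
  next
    case a_parallel
    then obtain c where "a = c *\<^sub>R x"
      by (auto simp: span_singleton)
    then have "D = outer x (y - (s * c) *\<^sub>R b)"
      by (simp add: D_def vec_eq_iff outer_def algebra_simps)
    then show ?thesis
      using rank_outer_le_1 by metis
  next
    case general
    have "rank D \<le> 2"
      unfolding D_def scaleR_outer_left by (rule rank_outer_diff_le_2)
    then show ?thesis
      using mem_col_space_outer_diff[OF general(1) s, of a x]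
        mem_row_space_outer_diff[OF general(2) s, of b y]
      unfolding D_def by blast
  qed
qed

theorem theorem2:
  fixes S :: "real^'m \<Rightarrow> real^'n \<Rightarrow> real^'q"
    and K :: "((real^'m) \<times> (real^'n)) set"
    and K' :: "(real^'n^'m) set"
    and z :: "real^'q" and \<sigma> :: real and u :: "real^'m" and v :: "real^'n"
  assumes "bilinear S"
    and "K' \<inter> {W. rank W \<le> 1} = {outer x y | x y. (x, y) \<in> K}"
    and "null_rank S 1 \<inter> set_diff_minus K' = {0}"
    and "\<sigma> > 0" and "norm u = 1" and "norm v = 1"
    and "(\<sigma> *\<^sub>R outer u v) \<in> K'"
    and "\<forall>X \<in> null_rank S 2 \<inter> set_diff_minus K' - {0}.
           u \<notin> col_space X \<or> v \<notin> row_space X"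
    and "z = lift_op S (\<sigma> *\<^sub>R outer u v)"
  shows "lift_op S (\<sigma> *\<^sub>R outer u v) = z
       \<and> (\<sigma> *\<^sub>R outer u v) \<in> K'
       \<and> (\<forall>W \<in> K'. lift_op S W = z \<and> W \<noteq> \<sigma> *\<^sub>R outer u v
             \<longrightarrow> rank (\<sigma> *\<^sub>R outer u v) < rank W)"
proof -
  define M where "M = \<sigma> *\<^sub>R outer u v"
  have "rank M \<le> 1"
    unfolding M_def scaleR_outer_left by (rule rank_outer_le_1)
  moreover have "2 \<le> rank W" if W: "W \<in> K'" "lift_op S W = z" "W \<noteq> M" for W
  proof (rule ccontr)
    assume "\<not> 2 \<le> rank W"
    then obtain x y where xy: "W = outer x y"
      using rank_le_1_imp_outer by (metis not_less_eq_eq numeral_2_eq_2 One_nat_def)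
    define D where "D = W - M"
    have D: "D \<in> set_diff_minus K'" "lift_op S D = 0" "D \<noteq> 0"
      using W assms(7,9) by (auto simp: D_def M_def set_diff_minus_def linear_diff[OF linear_lift_op])
    have "rank D \<le> 1 \<or> (rank D \<le> 2 \<and> u \<in> col_space D \<and> v \<in> row_space D)"
      unfolding D_def xy M_def using assms(4) by (intro rank_le_1_or_spans_outer_diff) simp
    then show False
      using D assms(3,8) by (auto simp: null_rank_def)
  qed
  ultimately show ?thesis
    using assms(7,9) by (fastforce simp: M_def)
qed

end
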